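(* Let $n \ge 4$ be even, let $s = n/2$ and $m = n/s = 2$. There exists a nonsingular matrix $A \in \mathbb{Q}^{n\times n}$ with $n$ distinct eigenvalues such that for every $v \in \mathbb{Q}^{n\times s}$ of the block-diagonal sparse form $$v = \begin{bmatrix} \ast & & & \\ & \ast & & \\ & & \ddots & \\ & & & \ast \end{bmatrix},$$ where each $\ast$ is an arbitrary $m\times 1 = 2\times 1$ column and all other entries are zero, the matrix $\mathcal{K}(A,v)$ is singular. For instance, for $n=4$ one may take $$A = \begin{bmatrix} 3&0&0&0\\ 0&5&-1&0\\ 0&4&10&0\\ 0&0&0&12\end{bmatrix},$$ for which $\mathcal{K}(A,v)$ is singular for all $v = \begin{bmatrix} a_1 & 0\\ a_2 & 0\\ 0 & b_1\\ 0 & b_2\end{bmatrix}$.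
   Context: For a field $F$, a matrix $A \in F^{n\times n}$, a divisor $s$ of $n$ and $m = n/s$, and a block $v \in F^{n\times s}$, define the block Krylov matrix $\mathcal{K}(A,v) := [\, v \mid Av \mid A^2 v \mid \cdots \mid A^{m-1}v \,] \in F^{n\times n}$. *)

theory Defs
  imports "Jordan_Normal_Form.Char_Poly"
begin

definition block_krylov :: "'a :: comm_ring_1 mat \<Rightarrow> 'a mat \<Rightarrow> 'a mat" where
  "block_krylov A v =
     mat (dim_row A) (dim_row A)
       (\<lambda>(i, j). ((A ^\<^sub>m (j div dim_col v)) * v) $$ (i, j mod dim_col v))"

definition block_diag_sparse :: "nat \<Rightarrow> 'a :: zero mat \<Rightarrow> bool" where
  "block_diag_sparse m v \<longleftrightarrow>
     (\<forall>i < dim_row v. \<forall>j < dim_col v. i div m \<noteq> j \<longrightarrow> v $$ (i, j) = 0)"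

end

theory Submission
  imports Defs
begin

text \<open>The witness is block diagonal: 3 on \<open>e\<^sub>0\<close>, 12 on \<open>e\<^sub>3\<close>, the block
  \<open>[[5, -1], [4, 10]]\<close> (eigenvalues 6 and 9) on \<open>e\<^sub>1, e\<^sub>2\<close>, and distinct scalars on the
  remaining coordinates. For block-sparse \<open>v\<close> the first two columns \<open>v\<^sub>0, v\<^sub>1\<close> of \<open>v\<close> are
  supported on rows \<open>{0, 1}\<close> and \<open>{2, 3}\<close>, and both \<open>(A - 3) v\<^sub>0\<close> and \<open>(A - 12) v\<^sub>1\<close> are
  multiples of \<open>e\<^sub>1 + 2 e\<^sub>2\<close>. Hence a nontrivial combination of \<open>v\<^sub>0, v\<^sub>1, A v\<^sub>0, A v\<^sub>1\<close>,
  four columns of \<open>K(A, v)\<close>, vanishes.\<close>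

lemma block_krylov_index:
  assumes "A \<in> carrier_mat n n" "v \<in> carrier_mat n s" "i < n" "j < s" "k * s + j < n"
  shows "block_krylov A v $$ (i, k * s + j) = (A ^\<^sub>m k * v) $$ (i, j)"
proof -
  have "(k * s + j) div s = k" "(k * s + j) mod s = j"
    using assms(4) by simp_all
  then show ?thesis
    using assms by (simp add: block_krylov_def)
qed

lemma det_zero_if_column_relation:
  fixes K :: "'a::field mat"
  assumes K: "K \<in> carrier_mat n n" and "j < n" "c j \<noteq> 0"
    and rel: "\<And>i. i < n \<Longrightarrow> (\<Sum>j<n. c j * K $$ (i, j)) = 0"
  shows "det K = 0"
proof -
  have "K *\<^sub>v vec n c = 0\<^sub>v n"
    by (rule eq_vecI) (use K rel in \<open>auto simp: scalar_prod_def lessThan_atLeast0 mult.commute\<close>)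
  moreover have "vec n c \<noteq> 0\<^sub>v n"
    using assms(2,3) by (metis index_vec index_zero_vec(1))
  ultimately show ?thesis
    using det_0_iff_vec_prod_zero_field[OF K] vec_carrier by blast
qed

text \<open>The paper's \<open>4 \<times> 4\<close> example, padded by diagonal entries \<open>i + 9\<close>, which avoid its
  eigenvalues 3, 6, 9, 12.\<close>
definition krylov_cex_diag :: "nat \<Rightarrow> 'a::field_char_0" where
  "krylov_cex_diag i =
     (if i = 0 then 3 else if i = 1 then 5 else if i = 2 then 10 else if i = 3 then 12
      else of_nat i + 9)"

definition krylov_cex :: "nat \<Rightarrow> 'a::field_char_0 mat" where
  "krylov_cex n = mat n n (\<lambda>(i, j).
     if i = j then krylov_cex_diag i
     else if i = 1 \<and> j = 2 then -1
     else if i = 2 \<and> j = 1 then 4 else 0)"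

definition krylov_cex_spectrum :: "nat \<Rightarrow> 'a::field_char_0 set" where
  "krylov_cex_spectrum n = {3, 6, 9, 12} \<union> (\<lambda>i. of_nat i + 9) ` {4..<n}"

lemma krylov_cex_carrier: "krylov_cex n \<in> carrier_mat n n"
  by (simp add: krylov_cex_def)

lemma krylov_cex_dims [simp]: "dim_row (krylov_cex n) = n" "dim_col (krylov_cex n) = n"
  by (simp_all add: krylov_cex_def)

lemma map_mat_of_rat_krylov_cex: "map_mat of_rat (krylov_cex n) = krylov_cex n"
  by (rule eq_matI) (auto simp: krylov_cex_def krylov_cex_diag_def of_rat_add)

lemma krylov_cex_mult_vec_index:
  assumes "2 < n" "u \<in> carrier_vec n" "i < n"
  shows "(krylov_cex n *\<^sub>v u) $ i =
    krylov_cex_diag i * u $ i + (if i = 1 then - u $ 2 else 0) + (if i = 2 then 4 * u $ 1 else 0)"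
proof -
  have "(krylov_cex n *\<^sub>v u) $ i = (\<Sum>j<n. krylov_cex n $$ (i, j) * u $ j)"
    using assms by (simp add: krylov_cex_def mult_mat_vec_def scalar_prod_def lessThan_atLeast0)
  also have "\<dots> = (\<Sum>j<n. (if j = i then krylov_cex_diag i * u $ j else 0)
      + (if i = 1 \<and> j = 2 then - u $ j else 0) + (if i = 2 \<and> j = 1 then 4 * u $ j else 0))"
    by (rule sum.cong) (use assms in \<open>auto simp: krylov_cex_def\<close>)
  also have "\<dots> = krylov_cex_diag i * u $ i + (if i = 1 then - u $ 2 else 0)
      + (if i = 2 then 4 * u $ 1 else 0)"
    using assms by (simp add: sum.distrib)
  finally show ?thesis .
qed

lemma eigenvalue_krylov_cex_imp_spectrum:
  assumes n: "4 \<le> n" and "eigenvalue (krylov_cex n) k"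
  shows "k \<in> krylov_cex_spectrum n"
proof -
  obtain u where u: "u \<in> carrier_vec n" "u \<noteq> 0\<^sub>v n" "krylov_cex n *\<^sub>v u = k \<cdot>\<^sub>v u"
    using assms(2) unfolding eigenvalue_def eigenvector_def by auto
  have eq: "krylov_cex_diag i * u $ i + (if i = 1 then - u $ 2 else 0)
      + (if i = 2 then 4 * u $ 1 else 0) = k * u $ i" if "i < n" for i
    using krylov_cex_mult_vec_index[of n u i] arg_cong[OF u(3), of "\<lambda>w. w $ i"] n u(1) that
    by simp
  obtain i where i: "i < n" "u $ i \<noteq> 0"
    using u(1,2) by (metis carrier_vecD eq_vecI index_zero_vec)
  show ?thesis
  proof (cases "i = 1 \<or> i = 2")
    case True
    have u2: "u $ 2 = (5 - k) * u $ 1"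
      using eq[of 1] n by (simp add: krylov_cex_diag_def algebra_simps)
    then have "u $ 1 \<noteq> 0"
      using True i(2) by auto
    moreover have "u $ 1 * ((k - 6) * (k - 9)) = 0"
      using eq[of 2] n unfolding u2 by (simp add: krylov_cex_diag_def algebra_simps)
    ultimately show ?thesis
      by (auto simp: krylov_cex_spectrum_def)
  next
    case False
    then have "k = krylov_cex_diag i"
      using eq[OF i(1)] i(2) by simp
    then show ?thesis
      using False i(1) by (auto simp: krylov_cex_spectrum_def krylov_cex_diag_def)
  qed
qed

lemma spectrum_imp_eigenvalue_krylov_cex:
  assumes n: "4 \<le> n" and k: "k \<in> krylov_cex_spectrum n"
  shows "eigenvalue (krylov_cex n) k"
proof -
  have eigenvalueI: "eigenvalue (krylov_cex n) k"
    if "u \<in> carrier_vec n" "j < n" "u $ j \<noteq> 0"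
      and "\<And>i. i < n \<Longrightarrow> krylov_cex_diag i * u $ i + (if i = 1 then - u $ 2 else 0)
             + (if i = 2 then 4 * u $ 1 else 0) = k * u $ i"
    for u j
  proof -
    have "krylov_cex n *\<^sub>v u = k \<cdot>\<^sub>v u"
      by (rule eq_vecI) (use that n krylov_cex_mult_vec_index[of n u] krylov_cex_carrier[of n] in auto)
    moreover have "u \<noteq> 0\<^sub>v n"
      using that by auto
    ultimately show ?thesis
      using that(1) unfolding eigenvalue_def eigenvector_def by auto
  qed
  consider "k = 3" | "k = 6" | "k = 9" | "k = 12" | i where "4 \<le> i" "i < n" "k = of_nat i + 9"
    using k unfolding krylov_cex_spectrum_def by auto
  then show ?thesis
  proof cases
    case 1
    show ?thesis
      by (rule eigenvalueI[of "unit_vec n 0" 0]) (use n 1 in \<open>auto simp: krylov_cex_diag_def\<close>)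
  next
    case 2
    show ?thesis
      by (rule eigenvalueI[of "vec n (\<lambda>j. if j = 1 then 1 else if j = 2 then -1 else 0)" 1])
        (use n 2 in \<open>auto simp: krylov_cex_diag_def\<close>)
  next
    case 3
    show ?thesis
      by (rule eigenvalueI[of "vec n (\<lambda>j. if j = 1 then 1 else if j = 2 then -4 else 0)" 1])
        (use n 3 in \<open>auto simp: krylov_cex_diag_def\<close>)
  next
    case 4
    show ?thesis
      by (rule eigenvalueI[of "unit_vec n 3" 3]) (use n 4 in \<open>auto simp: krylov_cex_diag_def\<close>)
  next
    case (5 i)
    show ?thesis
      by (rule eigenvalueI[of "unit_vec n i" i]) (use 5 in \<open>auto simp: krylov_cex_diag_def\<close>)
  qed
qed

lemma eigenvalue_krylov_cex_iff:
  "4 \<le> n \<Longrightarrow> eigenvalue (krylov_cex n) k \<longleftrightarrow> k \<in> krylov_cex_spectrum n"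
  using eigenvalue_krylov_cex_imp_spectrum spectrum_imp_eigenvalue_krylov_cex by blast

lemma card_krylov_cex_spectrum:
  assumes "4 \<le> n"
  shows "card (krylov_cex_spectrum n :: 'a::field_char_0 set) = n"
proof -
  have shift_ne: "of_nat i + 9 \<noteq> (of_nat j :: 'a)" if "j < 13" "4 \<le> i" for i j
    using that of_nat_eq_iff[of "i + 9" j, where 'a = 'a] by simp
  have disjoint: "{3, 6, 9, 12} \<inter> (\<lambda>i. of_nat i + 9) ` {4..<n} = ({} :: 'a set)"
    using shift_ne[of 3] shift_ne[of 6] shift_ne[of 9] shift_ne[of 12] by auto
  have "inj_on (\<lambda>i. of_nat i + (9::'a)) {4..<n}"
    by (auto simp: inj_on_def)
  then show ?thesis
    using card_Un_disjoint[OF _ _ disjoint] assms by (simp add: krylov_cex_spectrum_def card_image)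
qed

lemma det_krylov_cex_nonzero:
  assumes "4 \<le> n"
  shows "det (krylov_cex n) \<noteq> 0"
proof -
  have "of_nat i + 9 \<noteq> (0::'a)" for i
    using of_nat_neq_0[of "i + 8", where 'a = 'a] by (simp add: add.commute)
  then have "(0::'a) \<notin> krylov_cex_spectrum n"
    by (auto simp: krylov_cex_spectrum_def)
  moreover have "char_matrix (krylov_cex n) 0 = (krylov_cex n :: 'a mat)"
    by (rule eq_matI) (auto simp: char_matrix_def)
  ultimately show ?thesis
    using eigenvalue_det[OF krylov_cex_carrier, of n 0] eigenvalue_krylov_cex_iff[OF assms]
    by auto
qed

lemma krylov_cex_mult_vec_first_block:
  assumes "2 < n" "u \<in> carrier_vec n" "\<And>i. 2 \<le> i \<Longrightarrow> i < n \<Longrightarrow> u $ i = 0" "i < n"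
  shows "(krylov_cex n *\<^sub>v u) $ i =
    3 * u $ i + 2 * u $ 1 * (if i = 1 then 1 else if i = 2 then 2 else 0)"
  using assms krylov_cex_mult_vec_index[OF assms(1,2,4)]
  by (auto simp: krylov_cex_diag_def)

lemma krylov_cex_mult_vec_second_block:
  assumes "2 < n" "u \<in> carrier_vec n" "\<And>i. i < n \<Longrightarrow> i \<noteq> 2 \<Longrightarrow> i \<noteq> 3 \<Longrightarrow> u $ i = 0" "i < n"
  shows "(krylov_cex n *\<^sub>v u) $ i =
    12 * u $ i - u $ 2 * (if i = 1 then 1 else if i = 2 then 2 else 0)"
  using assms krylov_cex_mult_vec_index[OF assms(1,2,4)]
  by (auto simp: krylov_cex_diag_def)

lemma block_krylov_krylov_cex_column_relation:
  fixes v :: "'a::field_char_0 mat"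
  assumes "even n" "4 \<le> n" "v \<in> carrier_mat n (n div 2)" "block_diag_sparse 2 v"
    and coeffs: "2 * v $$ (1, 0) * p = v $$ (2, 1) * q" and i: "i < n"
  defines "K \<equiv> block_krylov (krylov_cex n) v" and "s \<equiv> n div 2"
  shows "p * (K $$ (i, s) - 3 * K $$ (i, 0)) + q * (K $$ (i, s + 1) - 12 * K $$ (i, 1)) = 0"
proof -
  define v0 where "v0 = col v 0"
  define v1 where "v1 = col v 1"
  define w :: 'a where "w = (if i = 1 then 1 else if i = 2 then 2 else 0)"
  have n: "n = 2 * s" "2 \<le> s"
    using assms(1,2) unfolding s_def by auto
  have v: "v \<in> carrier_mat n s"
    using assms(3) unfolding s_def .
  have v01: "v0 \<in> carrier_vec n" "v1 \<in> carrier_vec n"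
    using v unfolding v0_def v1_def by auto
  have v0_zero: "v0 $ k = 0" if "2 \<le> k" "k < n" for k
    using assms(4) v n that unfolding block_diag_sparse_def v0_def by auto
  have v1_zero: "v1 $ k = 0" if "k < n" "k \<noteq> 2" "k \<noteq> 3" for k
    using assms(4) v n that unfolding block_diag_sparse_def v1_def by auto
  have K_cols: "K $$ (i, 0) = v0 $ i" "K $$ (i, 1) = v1 $ i"
    "K $$ (i, s) = (krylov_cex n *\<^sub>v v0) $ i" "K $$ (i, s + 1) = (krylov_cex n *\<^sub>v v1) $ i"
    using block_krylov_index[OF krylov_cex_carrier v i, of 0 0]
      block_krylov_index[OF krylov_cex_carrier v i, of 1 0]
      block_krylov_index[OF krylov_cex_carrier v i, of 0 1]
      block_krylov_index[OF krylov_cex_carrier v i, of 1 1]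
      i v n
    by (auto simp: K_def v0_def v1_def)
  have v01_entries: "v0 $ 1 = v $$ (1, 0)" "v1 $ 2 = v $$ (2, 1)"
    using v n unfolding v0_def v1_def by auto
  have first: "K $$ (i, s) - 3 * K $$ (i, 0) = 2 * v0 $ 1 * w"
    using K_cols n i v01 v0_zero krylov_cex_mult_vec_first_block[of n v0 i] by (simp add: w_def)
  have second: "K $$ (i, s + 1) - 12 * K $$ (i, 1) = - (v1 $ 2 * w)"
    using K_cols n i v01 v1_zero krylov_cex_mult_vec_second_block[of n v1 i] by (simp add: w_def)
  show ?thesis
    unfolding first second v01_entries using coeffs by (simp add: algebra_simps)
qed

lemma det_block_krylov_krylov_cex:
  fixes v :: "'a::field_char_0 mat"
  assumes "even n" "4 \<le> n" "v \<in> carrier_mat n (n div 2)" "block_diag_sparse 2 v"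
  shows "det (block_krylov (krylov_cex n) v) = 0"
proof -
  define s where "s = n div 2"
  define K where "K = block_krylov (krylov_cex n) v"
  have n: "n = 2 * s" "2 \<le> s"
    using assms(1,2) unfolding s_def by auto
  obtain p q where coeffs: "p \<noteq> 0 \<or> q \<noteq> 0" "2 * v $$ (1, 0) * p = v $$ (2, 1) * q"
    using that[of 0 1] that[of "v $$ (2, 1)" "2 * v $$ (1, 0)"] by (cases "v $$ (2, 1) = 0") auto
  define c where "c j = (if j = s then p else 0) + (if j = 0 then - 3 * p else 0)
      + (if j = s + 1 then q else 0) + (if j = 1 then - 12 * q else 0)" for j
  have "(\<Sum>j<n. c j * K $$ (i, j)) = 0" if "i < n" for i
  proof -
    have "(\<Sum>j<n. c j * K $$ (i, j)) = (\<Sum>j<n. (if j = s then p * K $$ (i, j) else 0)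
        + (if j = 0 then - 3 * p * K $$ (i, j) else 0) + (if j = s + 1 then q * K $$ (i, j) else 0)
        + (if j = 1 then - 12 * q * K $$ (i, j) else 0))"
      by (rule sum.cong) (simp_all add: c_def algebra_simps)
    also have "\<dots> = p * (K $$ (i, s) - 3 * K $$ (i, 0)) + q * (K $$ (i, s + 1) - 12 * K $$ (i, 1))"
      using n by (simp add: sum.distrib algebra_simps)
    also have "\<dots> = 0"
      using block_krylov_krylov_cex_column_relation[OF assms coeffs(2) that]
      unfolding K_def s_def .
    finally show ?thesis .
  qed
  moreover have "c s = p" "c (s + 1) = q" "s < n" "s + 1 < n"
    using n unfolding c_def by auto
  moreover have "K \<in> carrier_mat n n"
    unfolding K_def block_krylov_def by simp
  ultimately show ?thesis
    using det_zero_if_column_relation coeffs(1) unfolding K_def by metis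
qed

theorem mainTheorem1:
  fixes n :: nat
  assumes "even n" and "n \<ge> 4"
  shows "\<exists>A :: rat mat. A \<in> carrier_mat n n \<and> det A \<noteq> 0 \<and>
           card {k :: complex. eigenvalue (map_mat of_rat A) k} = n \<and>
           (\<forall>v \<in> carrier_mat n (n div 2). block_diag_sparse 2 v \<longrightarrow>
              det (block_krylov A v) = 0)"
proof (intro exI conjI ballI impI)
  have "{k :: complex. eigenvalue (map_mat of_rat (krylov_cex n :: rat mat)) k}
      = krylov_cex_spectrum n"
    using eigenvalue_krylov_cex_iff[OF assms(2), where 'a = complex]
    by (auto simp: map_mat_of_rat_krylov_cex)
  then show "card {k :: complex. eigenvalue (map_mat of_rat (krylov_cex n :: rat mat)) k} = n"
    using card_krylov_cex_spectrum[OF assms(2)] by simp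
qed (use assms krylov_cex_carrier det_krylov_cex_nonzero det_block_krylov_krylov_cex in auto)

end
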